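(* Let $\Gamma=\langle V,(w_u)_{u\in V},\alpha,\beta\rangle$ be a star celebrity game with $\beta>1$ and $n=|V|$, let $S$ be a Nash equilibrium of $\Gamma$ and $G=G[S]$. If there is a vertex $v\in V$ with $|S_v|>6n/\beta$, then there exists $X\subseteq S_v$ with $|X|\ge 3n/\beta$ such that for every $x\in X$ the edge $\{v,x\}$ is a bridge of $G$.
   Context: A celebrity game $\Gamma=\langle V,(w_u)_{u\in V},\alpha,\beta\rangle$ consists of a set of players $V=\{1,\dots,n\}$, celebrity weights $w_u>0$, a link cost $\alpha>0$ and a critical distance $\beta$ with $1\le\beta\le n-1$. A strategy of player $u$ is a set $S_u\subseteq V\setminus\{u\}$; a strategy profile is $S=(S_1,\dots,S_n)$; its outcome graph $G[S]$ is the undirected graph on $V$ with edge set $\{\{u,v\}: u\in S_v\text{ or }v\in S_u\}$. With $d_G$ the graph distance (infinite between different connected components), the cost of player $u$ is $c_u(S)=\alpha|S_u|+\sum_{v:\,d_{G[S]}(u,v)>\beta}w_v$. $S$ is a Nash equilibrium if no player can strictly decrease its cost by changing only its own strategy. $\Gamma$ is a star celebrity game if $G[S]$ is connected for some Nash equilibrium $S$. A bridge is an edge whose removal increases the number of connected components. *)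

theory Defs
  imports Main "HOL-Library.Extended_Nat"
begin

text \<open>Players are V = {1..n}. Graphs are given by a set of undirected edges,
  each edge being a two-element set {u,v}.\<close>

definition players :: "nat \<Rightarrow> nat set" where
  "players n = {1..n}"

definition celebrity_game :: "nat \<Rightarrow> (nat \<Rightarrow> real) \<Rightarrow> real \<Rightarrow> nat \<Rightarrow> bool" where
  "celebrity_game n w \<alpha> \<beta> \<longleftrightarrow>
     (\<forall>u\<in>players n. w u > 0) \<and> \<alpha> > 0 \<and> 1 \<le> \<beta> \<and> \<beta> \<le> n - 1"

definition strategy_profile :: "nat \<Rightarrow> (nat \<Rightarrow> nat set) \<Rightarrow> bool" where
  "strategy_profile n S \<longleftrightarrow> (\<forall>u\<in>players n. S u \<subseteq> players n - {u})"

definition outcome_edges :: "nat \<Rightarrow> (nat \<Rightarrow> nat set) \<Rightarrow> nat set set" where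
  "outcome_edges n S = {{u, v} | u v. u \<in> players n \<and> v \<in> players n \<and> (u \<in> S v \<or> v \<in> S u)}"

fun walk :: "nat set set \<Rightarrow> nat list \<Rightarrow> bool" where
  "walk E [] = False"
| "walk E [x] = True"
| "walk E (x # y # xs) = ({x, y} \<in> E \<and> walk E (y # xs))"

text \<open>Graph distance on vertex set V (infinite between different components).\<close>
definition graph_dist :: "nat set \<Rightarrow> nat set set \<Rightarrow> nat \<Rightarrow> nat \<Rightarrow> enat" where
  "graph_dist V E u v =
     (INF xs \<in> {xs. walk E xs \<and> set xs \<subseteq> V \<and> hd xs = u \<and> last xs = v}. enat (length xs - 1))"

definition cost :: "nat \<Rightarrow> (nat \<Rightarrow> real) \<Rightarrow> real \<Rightarrow> nat \<Rightarrow> (nat \<Rightarrow> nat set) \<Rightarrow> nat \<Rightarrow> real" where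
  "cost n w \<alpha> \<beta> S u =
     \<alpha> * real (card (S u)) +
     (\<Sum>v\<in>{v\<in>players n. graph_dist (players n) (outcome_edges n S) u v > enat \<beta>}. w v)"

definition nash_equilibrium :: "nat \<Rightarrow> (nat \<Rightarrow> real) \<Rightarrow> real \<Rightarrow> nat \<Rightarrow> (nat \<Rightarrow> nat set) \<Rightarrow> bool" where
  "nash_equilibrium n w \<alpha> \<beta> S \<longleftrightarrow>
     strategy_profile n S \<and>
     (\<forall>u\<in>players n. \<forall>T. T \<subseteq> players n - {u} \<longrightarrow>
        cost n w \<alpha> \<beta> S u \<le> cost n w \<alpha> \<beta> (S(u := T)) u)"

definition graph_connected :: "nat set \<Rightarrow> nat set set \<Rightarrow> bool" where
  "graph_connected V E \<longleftrightarrow> (\<forall>u\<in>V. \<forall>v\<in>V. graph_dist V E u v < \<infinity>)"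

definition star_celebrity_game :: "nat \<Rightarrow> (nat \<Rightarrow> real) \<Rightarrow> real \<Rightarrow> nat \<Rightarrow> bool" where
  "star_celebrity_game n w \<alpha> \<beta> \<longleftrightarrow>
     celebrity_game n w \<alpha> \<beta> \<and>
     (\<exists>S. nash_equilibrium n w \<alpha> \<beta> S \<and> graph_connected (players n) (outcome_edges n S))"

definition components :: "nat set \<Rightarrow> nat set set \<Rightarrow> nat set set" where
  "components V E = {{v\<in>V. graph_dist V E u v < \<infinity>} | u. u \<in> V}"

definition is_bridge :: "nat set \<Rightarrow> nat set set \<Rightarrow> nat set \<Rightarrow> bool" where
  "is_bridge V E e \<longleftrightarrow> e \<in> E \<and> card (components V (E - {e})) > card (components V E)"

end

theory Submission
  imports Defs
begin

text \<open>In a Nash equilibrium every link \<open>{v, x}\<close> bought by \<open>v\<close> is needed: dropping it saves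
  \<open>\<alpha> > 0\<close>, so it must push some player \<open>y\<close> within distance \<open>\<beta>\<close> of \<open>v\<close> beyond \<open>\<beta>\<close>. If \<open>x\<close> stays
  reachable from \<open>v\<close> without the link, at least \<open>\<beta>/3\<close> vertices get farther from \<open>v\<close> when it is
  removed: the \<open>k\<close> vertices after \<open>v\<close> on a shortest walk to \<open>y\<close>, and the half next to \<open>x\<close> of a
  shortest detour of length \<open>L\<close> from \<open>v\<close> to \<open>x\<close>, where \<open>k + L > \<beta> + 1\<close>. These vertex sets are
  disjoint for different links, because a shortest walk to such a vertex must start with the
  removed link. Hence at most \<open>3n/\<beta>\<close> links of \<open>v\<close> are not bridges. From the star-game hypothesis only
  \<open>\<alpha> > 0\<close> is used.\<close>

definition walk_betw :: "nat set \<Rightarrow> nat set set \<Rightarrow> nat \<Rightarrow> nat \<Rightarrow> nat list \<Rightarrow> bool" where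
  "walk_betw V E u z xs \<longleftrightarrow> walk E xs \<and> set xs \<subseteq> V \<and> hd xs = u \<and> last xs = z"

lemma walk_nonempty: "walk E xs \<Longrightarrow> xs \<noteq> []"
  by (cases xs) auto

lemma walk_Cons: "walk E (x # xs) \<longleftrightarrow> xs = [] \<or> {x, hd xs} \<in> E \<and> walk E xs"
  by (cases xs) auto

lemma walk_append: "walk E xs \<Longrightarrow> walk E ys \<Longrightarrow> last xs = hd ys \<Longrightarrow> walk E (xs @ tl ys)"
proof (induction E xs rule: walk.induct)
  case (2 E x)
  then show ?case by (cases ys) auto
qed auto

lemma walk_appendD1: "walk E (xs @ ys) \<Longrightarrow> xs \<noteq> [] \<Longrightarrow> walk E xs"
proof (induction xs)
  case (Cons a xs)
  then show ?case by (cases xs) (auto simp: walk_Cons)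
qed auto

lemma walk_appendD2: "walk E (xs @ ys) \<Longrightarrow> ys \<noteq> [] \<Longrightarrow> walk E ys"
  by (induction xs) (auto simp: walk_Cons)

lemma walk_snoc: "walk E (xs @ [a, b]) \<longleftrightarrow> walk E (xs @ [a]) \<and> {a, b} \<in> E"
proof (induction xs)
  case (Cons c xs)
  then show ?case by (cases xs) (auto simp: walk_Cons)
qed auto

lemma walk_rev: "walk E xs \<Longrightarrow> walk E (rev xs)"
proof (induction E xs rule: walk.induct)
  case (3 E x y xs)
  then have "walk E (rev xs @ [y, x])"
    by (subst walk_snoc) (auto simp: insert_commute)
  then show ?case by simp
qed auto

lemma walk_mono: "walk E xs \<Longrightarrow> E \<subseteq> F \<Longrightarrow> walk F xs"
  by (induction E xs rule: walk.induct) auto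

lemma walk_Diff_edge: "walk E xs \<Longrightarrow> v \<notin> set xs \<Longrightarrow> walk (E - {{v, x}}) xs"
  by (induction E xs rule: walk.induct) auto

lemma walk_betw_take:
  assumes "walk_betw V E u z xs" "i < length xs"
  shows "walk_betw V E u (xs ! i) (take (Suc i) xs)"
proof -
  have ne: "take (Suc i) xs \<noteq> []" using assms(2) by (cases xs) auto
  have "walk E (take (Suc i) xs @ drop (Suc i) xs)"
    using assms(1) by (simp add: walk_betw_def)
  then have "walk E (take (Suc i) xs)" using ne walk_appendD1 by blast
  moreover have "set (take (Suc i) xs) \<subseteq> V"
    using assms(1) set_take_subset[of "Suc i" xs] by (auto simp: walk_betw_def)
  moreover have "hd (take (Suc i) xs) = u"
    using assms ne by (simp add: walk_betw_def hd_take)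
  moreover have "last (take (Suc i) xs) = xs ! i"
    using assms(2) by (simp add: take_Suc_conv_app_nth)
  ultimately show ?thesis by (simp add: walk_betw_def)
qed

lemma walk_betw_drop:
  assumes "walk_betw V E u z xs" "i < length xs"
  shows "walk_betw V E (xs ! i) z (drop i xs)"
proof -
  have "walk E (take i xs @ drop i xs)"
    using assms(1) by (simp add: walk_betw_def)
  then show ?thesis
    using assms set_drop_subset[of i xs] walk_appendD2
    by (fastforce simp: walk_betw_def hd_drop_conv_nth)
qed

lemma walk_betw_append:
  assumes xs: "walk_betw V E a b xs" and ys: "walk_betw V E b c ys"
  shows "walk_betw V E a c (xs @ tl ys)"
proof -
  have "xs \<noteq> []" "ys \<noteq> []" using xs ys walk_nonempty by (auto simp: walk_betw_def)
  moreover have "last (xs @ tl ys) = c"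
  proof (cases "tl ys = []")
    case True
    then have "ys = [hd ys]" using \<open>ys \<noteq> []\<close> by (metis list.collapse)
    then show ?thesis using xs ys True by (metis append_Nil2 last_ConsL walk_betw_def)
  next
    case False
    then show ?thesis using ys by (simp add: walk_betw_def last_tl)
  qed
  ultimately show ?thesis
    using xs ys walk_append by (auto simp: walk_betw_def dest: list.set_sel(2))
qed

lemma walk_betw_rev: "walk_betw V E a b xs \<Longrightarrow> walk_betw V E b a (rev xs)"
  using walk_rev walk_nonempty by (auto simp: walk_betw_def hd_rev last_rev)

lemma graph_dist_le_iff:
  "graph_dist V E u z \<le> enat k \<longleftrightarrow> (\<exists>xs. walk_betw V E u z xs \<and> length xs \<le> Suc k)"
proof
  define A where "A = {xs. walk E xs \<and> set xs \<subseteq> V \<and> hd xs = u \<and> last xs = z}"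
  define len where "len xs = enat (length xs - 1)" for xs :: "nat list"
  have dist: "graph_dist V E u z = Inf (len ` A)"
    by (simp add: graph_dist_def A_def len_def)
  assume le: "graph_dist V E u z \<le> enat k"
  then have "A \<noteq> {}"
    by (auto simp: dist top_enat_def)
  then have "Inf (len ` A) \<in> len ` A"
    unfolding Inf_enat_def by (auto intro: LeastI)
  then obtain xs where "xs \<in> A" "graph_dist V E u z = len xs"
    by (auto simp: dist)
  moreover have "xs \<noteq> []" using \<open>xs \<in> A\<close> walk_nonempty by (auto simp: A_def)
  ultimately show "\<exists>xs. walk_betw V E u z xs \<and> length xs \<le> Suc k"
    using le by (auto simp: walk_betw_def A_def len_def)
next
  assume "\<exists>xs. walk_betw V E u z xs \<and> length xs \<le> Suc k"
  then show "graph_dist V E u z \<le> enat k"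
    unfolding graph_dist_def walk_betw_def by (auto intro: INF_lower2)
qed

lemma graph_dist_le_length: "walk_betw V E u z xs \<Longrightarrow> graph_dist V E u z \<le> enat (length xs - 1)"
  by (metis graph_dist_le_iff Suc_pred' walk_betw_def le_refl length_greater_0_conv walk_nonempty)

lemma graph_dist_shortest_walk:
  assumes "graph_dist V E u z = enat k"
  obtains xs where "walk_betw V E u z xs" "length xs = Suc k"
proof -
  obtain xs where xs: "walk_betw V E u z xs" "length xs \<le> Suc k"
    using assms graph_dist_le_iff[of V E u z k] by auto
  have "xs \<noteq> []" using xs walk_nonempty by (auto simp: walk_betw_def)
  moreover have "\<not> length xs - 1 < k"
    using graph_dist_le_length[OF xs(1)] assms by auto
  ultimately show ?thesis using xs that by (cases xs) auto
qed

lemma graph_dist_refl: "u \<in> V \<Longrightarrow> graph_dist V E u u = 0"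
  using graph_dist_le_length[of V E u u "[u]"] by (simp add: walk_betw_def enat_0)

lemma graph_dist_edge: "{u, z} \<in> E \<Longrightarrow> u \<in> V \<Longrightarrow> z \<in> V \<Longrightarrow> graph_dist V E u z \<le> 1"
  using graph_dist_le_length[of V E u z "[u, z]"] by (simp add: walk_betw_def one_enat_def)

lemma graph_dist_triangle: "graph_dist V E a c \<le> graph_dist V E a b + graph_dist V E b c"
proof (cases "graph_dist V E a b" "graph_dist V E b c" rule: enat2_cases)
  case (enat_enat i j)
  obtain xs where xs: "walk_betw V E a b xs" "length xs = Suc i"
    using enat_enat graph_dist_shortest_walk by metis
  obtain ys where ys: "walk_betw V E b c ys" "length ys = Suc j"
    using enat_enat graph_dist_shortest_walk by metis
  have "graph_dist V E a c \<le> enat (i + j)"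
    using graph_dist_le_length[OF walk_betw_append[OF xs(1) ys(1)]] xs ys by simp
  then show ?thesis using enat_enat by simp
qed auto

lemma graph_dist_add_le:
  "graph_dist V E a b \<le> enat i \<Longrightarrow> graph_dist V E b c \<le> enat j \<Longrightarrow> graph_dist V E a c \<le> enat (i + j)"
  using graph_dist_triangle[of V E a c b] add_mono[of "graph_dist V E a b" "enat i"] by fastforce

lemma graph_dist_finite_trans:
  "graph_dist V E a b < \<infinity> \<Longrightarrow> graph_dist V E b c < \<infinity> \<Longrightarrow> graph_dist V E a c < \<infinity>"
  using graph_dist_triangle[of V E a c b]
  by (metis enat_ord_simps(4) order.strict_trans1 plus_eq_infty_iff_enat)

lemma graph_dist_sym: "graph_dist V E a b = graph_dist V E b a"
proof -
  have "graph_dist V E a b \<le> graph_dist V E b a" for a b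
  proof (cases "graph_dist V E b a")
    case (enat k)
    then obtain xs where "walk_betw V E b a xs" "length xs = Suc k"
      using graph_dist_shortest_walk by metis
    then show ?thesis using graph_dist_le_length[OF walk_betw_rev] enat by fastforce
  qed simp
  then show ?thesis by (metis order_antisym)
qed

lemma graph_dist_antimono: "E \<subseteq> F \<Longrightarrow> graph_dist V F u z \<le> graph_dist V E u z"
  unfolding graph_dist_def using walk_mono by (intro INF_superset_mono) auto

definition dist_increase_set :: "nat set \<Rightarrow> nat set set \<Rightarrow> nat \<Rightarrow> nat \<Rightarrow> nat set" where
  "dist_increase_set V E v x = {z \<in> V. graph_dist V E v z < graph_dist V (E - {{v, x}}) v z}"

lemma shortest_walk_via_edge:
  assumes d: "graph_dist V E v z = enat k"
    and nd: "\<not> graph_dist V (E - {{v, x}}) v z \<le> enat k"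
    and w: "walk_betw V E v z w" "length w = Suc k"
  obtains b where "w = v # x # b" "v \<notin> set (x # b)" "walk (E - {{v, x}}) (x # b)"
proof -
  obtain t where t: "w = v # t"
    using w by (metis walk_betw_def hd_Cons_tl walk_nonempty)
  have vt: "v \<notin> set t"
  proof
    assume "v \<in> set t"
    then obtain p q where pq: "t = p @ v # q" by (meson split_list)
    then have "walk E ((v # p) @ (v # q))" using w t by (simp add: walk_betw_def)
    then have "walk_betw V E v z (v # q)"
      using w t pq walk_appendD2 by (fastforce simp: walk_betw_def)
    then have "graph_dist V E v z \<le> enat (length q)" using graph_dist_le_length by fastforce
    then show False using d w t pq by simp
  qed
  have "t \<noteq> []"
  proof
    assume "t = []"
    then have "z = v" "v \<in> V" using w t by (auto simp: walk_betw_def)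
    then show False using nd graph_dist_refl[of v V] by (simp add: zero_enat_def)
  qed
  then obtain a b where ab: "t = a # b" by (cases t) auto
  have "walk E t" using w t \<open>t \<noteq> []\<close> by (simp add: walk_betw_def walk_Cons)
  then have walk_t: "walk (E - {{v, x}}) t" using vt by (rule walk_Diff_edge)
  have "a = x"
  proof (rule ccontr)
    assume "a \<noteq> x"
    then have "{v, a} \<in> E - {{v, x}}"
      using w t ab by (auto simp: walk_betw_def doubleton_eq_iff)
    then have "walk_betw V (E - {{v, x}}) v z w"
      using w walk_t t ab by (simp add: walk_betw_def)
    then show False using nd w graph_dist_le_length by fastforce
  qed
  then show ?thesis using that t ab vt walk_t by blast
qed

lemma dist_increase_set_disjoint:
  assumes "x \<noteq> x'"
  shows "dist_increase_set V E v x \<inter> dist_increase_set V E v x' = {}"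
proof (rule ccontr)
  assume "dist_increase_set V E v x \<inter> dist_increase_set V E v x' \<noteq> {}"
  then obtain z where z: "graph_dist V E v z < graph_dist V (E - {{v, x}}) v z"
    "graph_dist V E v z < graph_dist V (E - {{v, x'}}) v z"
    by (auto simp: dist_increase_set_def)
  then obtain k where k: "graph_dist V E v z = enat k"
    by (cases "graph_dist V E v z") auto
  obtain w where w: "walk_betw V E v z w" "length w = Suc k"
    using graph_dist_shortest_walk[OF k] by metis
  have "\<not> graph_dist V (E - {{v, y}}) v z \<le> enat k" if "y \<in> {x, x'}" for y
    using z k that by auto
  then have "hd (tl w) = x" "hd (tl w) = x'"
    by (metis shortest_walk_via_edge[OF k _ w] insertI1 insertI2 singletonI list.sel)+
  then show False using assms by simp
qed

lemma sum_card_dist_increase_set_le: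
  assumes "finite V"
  shows "(\<Sum>x\<in>A. card (dist_increase_set V E v x)) \<le> card V"
proof (cases "finite A")
  case True
  have "(\<Sum>x\<in>A. card (dist_increase_set V E v x)) = card (\<Union>x\<in>A. dist_increase_set V E v x)"
    using True assms dist_increase_set_disjoint
    by (intro card_UN_disjoint[symmetric]) (auto simp: dist_increase_set_def)
  also have "\<dots> \<le> card V"
    using assms by (intro card_mono) (auto simp: dist_increase_set_def)
  finally show ?thesis .
qed simp

lemma shortest_walk_via_edge_exists:
  assumes d: "graph_dist V E v y = enat k"
    and nd: "\<not> graph_dist V (E - {{v, x}}) v y \<le> enat k"
  obtains p where "walk_betw V E v y (v # p)" "walk_betw V (E - {{v, x}}) x y p" "length p = k"
proof -
  obtain w where w: "walk_betw V E v y w" "length w = Suc k"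
    using graph_dist_shortest_walk[OF d] by metis
  then obtain b where "w = v # x # b" "walk (E - {{v, x}}) (x # b)"
    using shortest_walk_via_edge[OF d nd] by metis
  then show ?thesis
    using that[of "x # b"] w by (auto simp: walk_betw_def)
qed

lemma graph_dist_Diff_edge_from_neighbour:
  assumes "graph_dist V E v y = enat k"
    and "\<not> graph_dist V (E - {{v, x}}) v y \<le> enat k"
  obtains j where "k = Suc j" "graph_dist V (E - {{v, x}}) x y \<le> enat j"
proof -
  obtain p where p: "walk_betw V (E - {{v, x}}) x y p" "length p = k"
    using shortest_walk_via_edge_exists[OF assms] by metis
  then have "k = Suc (k - 1)" using walk_nonempty by (cases p) (auto simp: walk_betw_def)
  then show ?thesis using that graph_dist_le_length[OF p(1)] p(2) by metis
qed

lemma card_dist_increase_set_ge_dist: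
  assumes "finite V"
    and d: "graph_dist V E v y = enat k"
    and nd: "\<not> graph_dist V (E - {{v, x}}) v y \<le> enat k"
  shows "k \<le> card (dist_increase_set V E v x)"
proof -
  let ?E' = "E - {{v, x}}"
  obtain p where p: "walk_betw V E v y (v # p)" "walk_betw V ?E' x y p" "length p = k"
    using shortest_walk_via_edge_exists[OF d nd] by metis
  have on_walk: "p ! j \<in> dist_increase_set V E v x \<and> graph_dist V E v (p ! j) = enat (Suc j)"
    if j: "j < k" for j
  proof -
    have to_pj: "graph_dist V E v (p ! j) \<le> enat (Suc j)"
      using graph_dist_le_length[OF walk_betw_take[OF p(1), of "Suc j"]] j p(3) by simp
    have from_pj': "graph_dist V ?E' (p ! j) y \<le> enat (k - 1 - j)"
      using graph_dist_le_length[OF walk_betw_drop[OF p(2), of j]] j p(3) by simp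
    then have from_pj: "graph_dist V E (p ! j) y \<le> enat (k - 1 - j)"
      using graph_dist_antimono[of ?E' E] order_trans by blast
    have "\<not> graph_dist V E v (p ! j) \<le> enat j"
    proof
      assume "graph_dist V E v (p ! j) \<le> enat j"
      then have "graph_dist V E v y \<le> enat (j + (k - 1 - j))"
        using from_pj by (rule graph_dist_add_le)
      then show False using d j by simp
    qed
    then have dist_pj: "graph_dist V E v (p ! j) = enat (Suc j)"
      using to_pj by (cases "graph_dist V E v (p ! j)") auto
    have "\<not> graph_dist V ?E' v (p ! j) \<le> enat (Suc j)"
    proof
      assume "graph_dist V ?E' v (p ! j) \<le> enat (Suc j)"
      then have "graph_dist V ?E' v y \<le> enat (Suc j + (k - 1 - j))"
        using from_pj' by (rule graph_dist_add_le)
      then show False using nd j by simp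
    qed
    moreover have "p ! j \<in> V" using p j by (auto simp: walk_betw_def)
    ultimately show ?thesis using dist_pj by (auto simp: dist_increase_set_def)
  qed
  have "inj_on (\<lambda>j. p ! j) {..<k}"
    by (rule inj_onI) (metis lessThan_iff on_walk Suc_inject enat.inject)
  then have "card ((\<lambda>j. p ! j) ` {..<k}) = k" by (simp add: card_image)
  moreover have "(\<lambda>j. p ! j) ` {..<k} \<subseteq> dist_increase_set V E v x" using on_walk by auto
  moreover have "finite (dist_increase_set V E v x)"
    using assms(1) by (simp add: dist_increase_set_def)
  ultimately show ?thesis by (metis card_mono)
qed

text \<open>On a shortest detour from \<open>v\<close> back to \<open>x\<close> avoiding \<open>{v, x}\<close>, every vertex in the half
  next to \<open>x\<close> is reached faster through that edge.\<close>
lemma card_dist_increase_set_ge_detour: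
  assumes "finite V" and edge: "{v, x} \<in> E" "v \<in> V" "x \<in> V"
    and detour: "graph_dist V (E - {{v, x}}) v x = enat L"
  shows "L div 2 \<le> card (dist_increase_set V E v x)"
proof -
  let ?E' = "E - {{v, x}}"
  obtain R where R: "walk_betw V ?E' v x R" "length R = Suc L"
    using graph_dist_shortest_walk[OF detour] by metis
  have on_detour: "R ! (L - t) \<in> dist_increase_set V E v x \<and> graph_dist V ?E' v (R ! (L - t)) = enat (L - t)"
    if t: "t < L div 2" for t
  proof -
    have to_r: "graph_dist V ?E' v (R ! (L - t)) \<le> enat (L - t)"
      using graph_dist_le_length[OF walk_betw_take[OF R(1), of "L - t"]] R(2) t by simp
    have from_r: "graph_dist V ?E' (R ! (L - t)) x \<le> enat t"
      using graph_dist_le_length[OF walk_betw_drop[OF R(1), of "L - t"]] R(2) t by simp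
    have "\<not> graph_dist V ?E' v (R ! (L - t)) \<le> enat (L - t - 1)"
    proof
      assume "graph_dist V ?E' v (R ! (L - t)) \<le> enat (L - t - 1)"
      then have "graph_dist V ?E' v x \<le> enat (L - t - 1 + t)"
        using from_r by (rule graph_dist_add_le)
      then show False using detour t by simp
    qed
    then have dist_r: "graph_dist V ?E' v (R ! (L - t)) = enat (L - t)"
      using to_r by (cases "graph_dist V ?E' v (R ! (L - t))") auto
    have "graph_dist V E (R ! (L - t)) x \<le> enat t"
      using graph_dist_antimono[of ?E' E] from_r order_trans by blast
    then have "graph_dist V E x (R ! (L - t)) \<le> enat t"
      by (simp add: graph_dist_sym)
    moreover have "graph_dist V E v x \<le> enat 1"
      using graph_dist_edge[OF edge] by (simp add: one_enat_def)
    ultimately have "graph_dist V E v (R ! (L - t)) \<le> enat (1 + t)"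
      by (intro graph_dist_add_le)
    also have "\<dots> < enat (L - t)" using t by simp
    finally have "R ! (L - t) \<in> dist_increase_set V E v x"
      using dist_r R by (auto simp: dist_increase_set_def walk_betw_def)
    then show ?thesis using dist_r by simp
  qed
  have "inj_on (\<lambda>t. R ! (L - t)) {..<L div 2}"
  proof (rule inj_onI)
    fix s t assume "s \<in> {..<L div 2}" "t \<in> {..<L div 2}" "R ! (L - s) = R ! (L - t)"
    then have "enat (L - s) = enat (L - t)" using on_detour by (metis lessThan_iff)
    then show "s = t" using \<open>s \<in> _\<close> \<open>t \<in> _\<close> by auto
  qed
  then have "card ((\<lambda>t. R ! (L - t)) ` {..<L div 2}) = L div 2" by (simp add: card_image)
  moreover have "(\<lambda>t. R ! (L - t)) ` {..<L div 2} \<subseteq> dist_increase_set V E v x"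
    using on_detour by auto
  moreover have "finite (dist_increase_set V E v x)"
    using assms(1) by (simp add: dist_increase_set_def)
  ultimately show ?thesis by (metis card_mono)
qed

lemma card_dist_increase_set_ge:
  assumes "finite V" and edge: "{v, x} \<in> E" "v \<in> V" "x \<in> V"
    and near: "graph_dist V E v y \<le> enat \<beta>"
    and far: "\<not> graph_dist V (E - {{v, x}}) v y \<le> enat \<beta>"
    and reachable: "graph_dist V (E - {{v, x}}) v x < \<infinity>"
  shows "\<beta> \<le> 3 * card (dist_increase_set V E v x)"
proof -
  let ?E' = "E - {{v, x}}"
  obtain k where k: "graph_dist V E v y = enat k" "k \<le> \<beta>"
    using near by (cases "graph_dist V E v y") auto
  have nk: "\<not> graph_dist V ?E' v y \<le> enat k"
    using far k(2) by (meson enat_ord_simps(1) order_trans)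
  obtain j where j: "k = Suc j" "graph_dist V ?E' x y \<le> enat j"
    using graph_dist_Diff_edge_from_neighbour[OF k(1) nk] by metis
  obtain L where L: "graph_dist V ?E' v x = enat L"
    using reachable by (cases "graph_dist V ?E' v x") auto
  have "graph_dist V ?E' v y \<le> enat (L + j)"
    using L j(2) by (intro graph_dist_add_le) simp_all
  then have "\<not> L + j \<le> \<beta>"
    using far by (meson enat_ord_simps(1) order_trans)
  moreover have "k \<le> card (dist_increase_set V E v x)"
    using card_dist_increase_set_ge_dist[OF assms(1) k(1) nk] .
  moreover have "L div 2 \<le> card (dist_increase_set V E v x)"
    using card_dist_increase_set_ge_detour[OF assms(1) edge L] .
  ultimately show ?thesis using j(1) by linarith
qed

lemma components_eq_image: "components V E = (\<lambda>u. {z \<in> V. graph_dist V E u z < \<infinity>}) ` V"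
  unfolding components_def by auto

text \<open>Each component of \<open>E\<close> is the union of the \<open>E\<close>-closures of components of the smaller edge set,
  so merging the two distinct components of \<open>v\<close> and \<open>x\<close> makes the closure map non-injective.\<close>
lemma is_bridge_if_disconnected:
  assumes "finite V" and edge: "{v, x} \<in> E" "v \<in> V" "x \<in> V"
    and apart: "\<not> graph_dist V (E - {{v, x}}) v x < \<infinity>"
  shows "is_bridge V E {v, x}"
proof -
  let ?E' = "E - {{v, x}}"
  define C where "C F u = {z \<in> V. graph_dist V F u z < \<infinity>}" for F u
  define closure where "closure A = {z \<in> V. \<exists>c\<in>A. graph_dist V E c z < \<infinity>}" for A
  have reach_self: "u \<in> C F u" if "u \<in> V" for F u
    using graph_dist_refl[OF that] that by (simp add: C_def zero_enat_def)
  have closure_C: "closure (C ?E' u) = C E u" if "u \<in> V" for u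
  proof
    show "closure (C ?E' u) \<subseteq> C E u"
      using graph_dist_antimono[of ?E' E V] graph_dist_finite_trans
      unfolding closure_def C_def by (blast intro: le_less_trans)
    show "C E u \<subseteq> closure (C ?E' u)"
      using that reach_self unfolding closure_def C_def by auto
  qed
  have components_E: "components V E = closure ` components V ?E'"
    unfolding components_eq_image C_def[symmetric] image_image using closure_C by auto
  have finite_components: "finite (components V ?E')"
    unfolding components_eq_image using assms(1) by simp
  have "x \<notin> C ?E' v" using apart by (simp add: C_def)
  then have "C ?E' v \<noteq> C ?E' x" using reach_self[OF edge(3)] by blast
  moreover have "C E v = C E x"
  proof -
    have "graph_dist V E v x < \<infinity>"
      using graph_dist_edge[OF edge] by (cases "graph_dist V E v x") auto
    moreover from this have "graph_dist V E x v < \<infinity>" by (simp add: graph_dist_sym)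
    ultimately show ?thesis unfolding C_def using graph_dist_finite_trans by blast
  qed
  moreover have "C ?E' v \<in> components V ?E'" "C ?E' x \<in> components V ?E'"
    using edge unfolding components_eq_image C_def by auto
  ultimately have "\<not> inj_on closure (components V ?E')"
    using closure_C edge unfolding inj_on_def by metis
  then have "card (components V E) < card (components V ?E')"
    unfolding components_E
    using inj_on_iff_eq_card[OF finite_components, of closure]
      card_image_le[OF finite_components, of closure]
    by linarith
  then show ?thesis using edge by (simp add: is_bridge_def)
qed

lemma edge_in_outcome_edges:
  "x \<in> S v \<Longrightarrow> v \<in> players n \<Longrightarrow> x \<in> players n \<Longrightarrow> {v, x} \<in> outcome_edges n S"
  unfolding outcome_edges_def by blast

lemma outcome_edges_drop_link:
  assumes "x \<in> S v" "x \<noteq> v"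
  shows "outcome_edges n (S(v := S v - {x})) =
           (if v \<in> S x then outcome_edges n S else outcome_edges n S - {{v, x}})"
proof -
  have link: "(a \<in> (S(v := S v - {x})) b \<or> b \<in> (S(v := S v - {x})) a) \<longleftrightarrow>
      (a \<in> S b \<or> b \<in> S a) \<and> ({a, b} \<noteq> {v, x} \<or> v \<in> S x)" for a b
    using assms by (auto simp: doubleton_eq_iff)
  show ?thesis
    unfolding outcome_edges_def link by auto
qed

lemma cost_drop_link:
  assumes "finite (S v)" "x \<in> S v"
    and same_far: "\<And>y. y \<in> players n \<Longrightarrow>
       graph_dist (players n) (outcome_edges n (S(v := S v - {x}))) v y > enat \<beta> \<longleftrightarrow>
       graph_dist (players n) (outcome_edges n S) v y > enat \<beta>"
  shows "cost n w \<alpha> \<beta> (S(v := S v - {x})) v = cost n w \<alpha> \<beta> S v - \<alpha>"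
proof -
  have "card (S v) > 0" using assms(1,2) card_gt_0_iff by blast
  then have "real (card (S v)) = real (card (S v - {x})) + 1"
    using assms(1,2) by (simp add: of_nat_diff)
  moreover have "{y \<in> players n. graph_dist (players n) (outcome_edges n (S(v := S v - {x}))) v y > enat \<beta>}
     = {y \<in> players n. graph_dist (players n) (outcome_edges n S) v y > enat \<beta>}"
    using same_far by blast
  ultimately show ?thesis by (simp add: cost_def algebra_simps)
qed

lemma nash_strategy_subset:
  "nash_equilibrium n w \<alpha> \<beta> S \<Longrightarrow> v \<in> players n \<Longrightarrow> S v \<subseteq> players n - {v}"
  by (auto simp: nash_equilibrium_def strategy_profile_def)

lemma nash_link_needed:
  assumes ne: "nash_equilibrium n w \<alpha> \<beta> S" and "\<alpha> > 0"
    and v: "v \<in> players n" and x: "x \<in> S v"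
  shows "\<exists>y\<in>players n. graph_dist (players n) (outcome_edges n S) v y \<le> enat \<beta> \<and>
           \<not> graph_dist (players n) (outcome_edges n S - {{v, x}}) v y \<le> enat \<beta>"
proof (rule ccontr)
  let ?E = "outcome_edges n S" and ?S' = "S(v := S v - {x})"
  assume no_witness: "\<not> ?thesis"
  have Sv: "S v \<subseteq> players n - {v}" using nash_strategy_subset[OF ne v] .
  then have "finite (S v)" by (rule finite_subset) (simp add: players_def)
  have E': "outcome_edges n ?S' = (if v \<in> S x then ?E else ?E - {{v, x}})"
    using outcome_edges_drop_link[of x S v] x Sv by blast
  have "S v - {x} \<subseteq> players n - {v}" using Sv by blast
  then have no_gain: "cost n w \<alpha> \<beta> S v \<le> cost n w \<alpha> \<beta> ?S' v"
    using ne v by (simp add: nash_equilibrium_def)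
  have "graph_dist (players n) (outcome_edges n ?S') v y > enat \<beta> \<longleftrightarrow>
      graph_dist (players n) ?E v y > enat \<beta>" if "y \<in> players n" for y
  proof -
    have "outcome_edges n ?S' \<supseteq> ?E - {{v, x}}"
      using E' by auto
    then have "graph_dist (players n) (outcome_edges n ?S') v y \<le> graph_dist (players n) (?E - {{v, x}}) v y"
      by (rule graph_dist_antimono)
    moreover have "graph_dist (players n) ?E v y \<le> graph_dist (players n) (outcome_edges n ?S') v y"
      using E' by (intro graph_dist_antimono) auto
    ultimately show ?thesis
      using no_witness that by (meson not_le order_trans)
  qed
  then have "cost n w \<alpha> \<beta> ?S' v = cost n w \<alpha> \<beta> S v - \<alpha>"
    using cost_drop_link[of S v x, OF \<open>finite (S v)\<close> x] by blast
  then show False using no_gain \<open>\<alpha> > 0\<close> by simp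
qed

lemma nash_card_nonbridge_links_le:
  assumes ne: "nash_equilibrium n w \<alpha> \<beta> S" and "\<alpha> > 0" and v: "v \<in> players n"
  shows "\<beta> * card {x \<in> S v. graph_dist (players n) (outcome_edges n S - {{v, x}}) v x < \<infinity>} \<le> 3 * n"
proof -
  let ?V = "players n" and ?E = "outcome_edges n S"
  let ?Y = "{x \<in> S v. graph_dist ?V (?E - {{v, x}}) v x < \<infinity>}"
  have V: "finite ?V" "card ?V = n" by (simp_all add: players_def)
  have "\<beta> \<le> 3 * card (dist_increase_set ?V ?E v x)" if x: "x \<in> ?Y" for x
  proof -
    have xS: "x \<in> S v" and reachable: "graph_dist ?V (?E - {{v, x}}) v x < \<infinity>"
      using x by auto
    have "x \<in> ?V" using nash_strategy_subset[OF ne v] xS by blast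
    moreover obtain y where "graph_dist ?V ?E v y \<le> enat \<beta>"
      "\<not> graph_dist ?V (?E - {{v, x}}) v y \<le> enat \<beta>"
      using nash_link_needed[OF ne \<open>\<alpha> > 0\<close> v xS] by blast
    ultimately show ?thesis
      using card_dist_increase_set_ge[OF V(1) edge_in_outcome_edges[of x S v n, OF xS v] v] reachable by blast
  qed
  then have "\<beta> * card ?Y \<le> 3 * (\<Sum>x\<in>?Y. card (dist_increase_set ?V ?E v x))"
    using sum_mono[of ?Y "\<lambda>_. \<beta>"] by (simp add: sum_distrib_left mult.commute)
  also have "\<dots> \<le> 3 * n"
    using sum_card_dist_increase_set_le[OF V(1)] V(2) by simp
  finally show ?thesis .
qed

theorem lemma2:
  fixes n :: nat and w :: "nat \<Rightarrow> real" and \<alpha> :: real and \<beta> :: nat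
    and S :: "nat \<Rightarrow> nat set" and v :: nat
  assumes "star_celebrity_game n w \<alpha> \<beta>"
    and "\<beta> > 1"
    and "nash_equilibrium n w \<alpha> \<beta> S"
    and "v \<in> players n"
    and "real (card (S v)) > 6 * real n / real \<beta>"
  shows "\<exists>X \<subseteq> S v. real (card X) \<ge> 3 * real n / real \<beta> \<and>
           (\<forall>x\<in>X. is_bridge (players n) (outcome_edges n S) {v, x})"
proof -
  let ?V = "players n" and ?E = "outcome_edges n S"
  define X where "X = {x \<in> S v. \<not> graph_dist ?V (?E - {{v, x}}) v x < \<infinity>}"
  have Sv: "S v \<subseteq> ?V - {v}" using nash_strategy_subset[OF assms(3,4)] .
  have "\<alpha> > 0" using assms(1) by (simp add: star_celebrity_game_def celebrity_game_def)
  moreover have "S v - X = {x \<in> S v. graph_dist ?V (?E - {{v, x}}) v x < \<infinity>}"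
    by (auto simp: X_def)
  ultimately have "\<beta> * card (S v - X) \<le> 3 * n"
    using nash_card_nonbridge_links_le[OF assms(3) _ assms(4)] by simp
  then have "real (card (S v - X)) \<le> 3 * real n / real \<beta>"
    using assms(2) by (simp add: field_simps flip: of_nat_mult)
  moreover have "finite (S v)" using Sv by (rule finite_subset) (simp add: players_def)
  then have "real (card X) = real (card (S v)) - real (card (S v - X))"
    using card_Diff_subset[of X "S v"] card_mono[of "S v" X]
    by (simp add: X_def finite_subset of_nat_diff Diff_Diff_Int Int_absorb1)
  moreover have "is_bridge ?V ?E {v, x}" if "x \<in> X" for x
    using that Sv assms(4)
    by (intro is_bridge_if_disconnected edge_in_outcome_edges) (auto simp: X_def players_def)
  ultimately show ?thesis
    using assms(5) by (intro exI[of _ X]) (auto simp: X_def)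
qed

end
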